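(* Consider any sequences $\{(x_k,y_k,\gamma_k)\}_{k\ge0}$, $\{(\tilde x_k,u_k,\tilde\gamma_k)\}_{k\ge1}$ generated by the inexact symmetric proximal ADMM described in the context, and let $z_k=(x_k,y_k,\gamma_k)$ ($k\ge0$), $\tilde z_k=(\tilde x_k,y_k,\tilde\gamma_k)$ ($k\ge1$). Then for every $z^*\in T^{-1}(0)$ and every $k\ge1$, $$\|z^*-z_k\|_M^2-\|z^*-z_{k-1}\|_M^2\le\|\tilde z_k-z_k\|_M^2-\|\tilde z_k-z_{k-1}\|_M^2.$$
   Context: Let $f:\mathbb{R}^n\to(-\infty,\infty]$ and $g:\mathbb{R}^p\to(-\infty,\infty]$ be proper closed convex functions, $A\in\mathbb{R}^{m\times n}$, $B\in\mathbb{R}^{m\times p}$, $b\in\mathbb{R}^m$ (problem: $\min\{f(x)+g(y):Ax+By=b\}$). Standing assumption: there exists $(x^*,y^*,\gamma^* )$ solving the Lagrangian system $0\in\partial f(x)-A^*\gamma$, $0\in\partial g(y)-B^*\gamma$, $0=Ax+By-b$. Here $\partial$ is the subdifferential, $A^*$ the transpose, $\mathbb{S}^n_{++}$ ($\mathbb{S}^p_+$) the symmetric positive definite (semidefinite) matrices, and $\|z\|_Q=\sqrt{\langle Qz,z\rangle}$ for $Q$ positive semidefinite. Algorithm (inexact symmetric proximal ADMM): given $(x_0,y_0,\gamma_0)\in\mathbb{R}^n\times\mathbb{R}^p\times\mathbb{R}^m$, $\beta>0$, $\tilde\sigma,\hat\sigma\in[0,1)$, $G\in\mathbb{S}^n_{++}$,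 $H\in\mathbb{S}^p_+$, and $(\tau,\theta)\in\mathcal R_{\tilde\sigma}:=\{(\tau,\theta):\tau\in(-1,1-\tilde\sigma),\ \tau+\theta>0,\ (1-\tau^2)(2-\tau-\theta-\tilde\sigma)-(1-\theta)^2(1-\tau-\tilde\sigma)>0\}$. For $k=1,2,\dots$: compute $(\tilde x_k,u_k)$ with $u_k\in\partial f(\tilde x_k)-A^*\tilde\gamma_k$ and $\|\tilde x_k-x_{k-1}+G^{-1}u_k\|_G^2\le\frac{\tilde\sigma}{\beta}\|\tilde\gamma_k-\gamma_{k-1}\|^2+\hat\sigma\|\tilde x_k-x_{k-1}\|_G^2$, where $\tilde\gamma_k=\gamma_{k-1}-\beta(A\tilde x_k+By_{k-1}-b)$; set $\gamma_{k-1/2}=\gamma_{k-1}-\tau\beta(A\tilde x_k+By_{k-1}-b)$; let $y_k$ be an optimal solution of $\min_y\{g(y)-\langle\gamma_{k-1/2},By\rangle+\frac\beta2\|A\tilde x_k+By-b\|^2+\frac12\|y-y_{k-1}\|_H^2\}$; set $x_k=x_{k-1}-G^{-1}u_k$ and $\gamma_k=\gamma_{k-1/2}-\theta\beta(A\tilde x_k+By_k-b)$. Definitions: $T(x,y,\gamma)=(\partial f(x)-A^*\gamma,\ \partial g(y)-B^*\gamma,\ Ax+By-b)$; $M=\begin{bmatrix}G&0&0\\0&H+\frac{(\tau-\tau\theta+\theta)\beta}{\tau+\theta}B^*B&-\frac{\tau}{\tau+\theta}B^*\\0&-\frac{\tau}{\tau+\theta}B&\frac{1}{(\tau+\theta)\beta}I\end{bmatrix}$.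 *)

theory Defs
  imports "HOL-Analysis.Analysis"
begin

definition proper_fun :: "('a \<Rightarrow> ereal) \<Rightarrow> bool" where
  "proper_fun f \<longleftrightarrow> (\<forall>x. f x \<noteq> -\<infinity>) \<and> (\<exists>x. f x \<noteq> \<infinity>)"

definition epigraph_e :: "('a \<Rightarrow> ereal) \<Rightarrow> ('a \<times> real) set" where
  "epigraph_e f = {(x, t). f x \<le> ereal t}"

definition closed_fun :: "('a::topological_space \<Rightarrow> ereal) \<Rightarrow> bool" where
  "closed_fun f \<longleftrightarrow> closed (epigraph_e f)"

definition convex_fun :: "('a::real_vector \<Rightarrow> ereal) \<Rightarrow> bool" where
  "convex_fun f \<longleftrightarrow> convex (epigraph_e f)"

definition subdiff :: "('a::real_inner \<Rightarrow> ereal) \<Rightarrow> 'a \<Rightarrow> 'a set" where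
  "subdiff f x = {v. f x \<noteq> \<infinity> \<and> f x \<noteq> -\<infinity> \<and>
                     (\<forall>y. f y \<ge> f x + ereal (v \<bullet> (y - x)))}"

definition sym_mat :: "real^'n^'n \<Rightarrow> bool" where
  "sym_mat Q \<longleftrightarrow> transpose Q = Q"

definition pos_def :: "real^'n^'n \<Rightarrow> bool" where
  "pos_def Q \<longleftrightarrow> sym_mat Q \<and> (\<forall>v. v \<noteq> 0 \<longrightarrow> v \<bullet> (Q *v v) > 0)"

definition pos_semidef :: "real^'n^'n \<Rightarrow> bool" where
  "pos_semidef Q \<longleftrightarrow> sym_mat Q \<and> (\<forall>v. v \<bullet> (Q *v v) \<ge> 0)"

definition qnorm2 :: "real^'n^'n \<Rightarrow> real^'n \<Rightarrow> real" where
  "qnorm2 Q v = (Q *v v) \<bullet> v"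

definition region :: "real \<Rightarrow> real \<Rightarrow> real \<Rightarrow> bool" where
  "region \<sigma> \<tau> \<theta> \<longleftrightarrow> -1 < \<tau> \<and> \<tau> < 1 - \<sigma> \<and> \<tau> + \<theta> > 0 \<and>
     (1 - \<tau>^2) * (2 - \<tau> - \<theta> - \<sigma>) - (1 - \<theta>)^2 * (1 - \<tau> - \<sigma>) > 0"

text \<open>Zeros of the operator T: \<open>0 \<in> T(x,y,\<gamma>)\<close>.\<close>
definition T_zero :: "(real^'n \<Rightarrow> ereal) \<Rightarrow> (real^'p \<Rightarrow> ereal) \<Rightarrow> real^'n^'m \<Rightarrow> real^'p^'m
    \<Rightarrow> real^'m \<Rightarrow> real^'n \<Rightarrow> real^'p \<Rightarrow> real^'m \<Rightarrow> bool" where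
  "T_zero f g A B b x y \<gamma> \<longleftrightarrow>
     transpose A *v \<gamma> \<in> subdiff f x \<and> transpose B *v \<gamma> \<in> subdiff g y \<and> A *v x + B *v y - b = 0"

text \<open>\<open>\<parallel>(dx,dy,d\<gamma>)\<parallel>_M^2 = \<langle>M(dx,dy,d\<gamma>),(dx,dy,d\<gamma>)\<rangle>\<close> with the block matrix M
  written out blockwise.\<close>
definition Mnorm2 :: "real^'n^'n \<Rightarrow> real^'p^'p \<Rightarrow> real^'p^'m \<Rightarrow> real \<Rightarrow> real \<Rightarrow> real
    \<Rightarrow> real^'n \<Rightarrow> real^'p \<Rightarrow> real^'m \<Rightarrow> real" where
  "Mnorm2 G H B \<beta> \<tau> \<theta> dx dy dg =
     (G *v dx) \<bullet> dx
   + ((H *v dy) + ((\<tau> - \<tau> * \<theta> + \<theta>) * \<beta> / (\<tau> + \<theta>)) *\<^sub>R (transpose B *v (B *v dy))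
       - (\<tau> / (\<tau> + \<theta>)) *\<^sub>R (transpose B *v dg)) \<bullet> dy
   + (- (\<tau> / (\<tau> + \<theta>)) *\<^sub>R (B *v dy) + (1 / ((\<tau> + \<theta>) * \<beta>)) *\<^sub>R dg) \<bullet> dg"

end

(* Since M is symmetric, the four-point identity
     |p - c|^2_M - |p - d|^2_M - (|q - c|^2_M - |q - d|^2_M) = -2 <M(d - c), q - p>
   reduces the claim to <M(z_{k-1} - z_k), z~_k - z*> >= 0.  The matrix M is built so that
   M(z_{k-1} - z_k) = (u_k, v_k - B^T gamma~_k, A x~_k + B y_k - b), where v_k is the subgradient of g
   at y_k given by optimality of the y-subproblem.  As A x* + B y* = b, this pairing equals
   <u_k + A^T gamma~_k - A^T gamma*, x~_k - x*> + <v_k - B^T gamma*, y_k - y*>, which is nonnegative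
   by monotonicity of the subdifferentials of f and g. *)
theory Submission
  imports Defs
begin

lemma pos_def_invertible:
  fixes G :: "real^'n^'n"
  assumes "pos_def G"
  shows "invertible G"
proof -
  have "\<forall>v. G *v v = 0 \<longrightarrow> v = 0"
    using assms unfolding pos_def_def by (metis inner_zero_right less_irrefl)
  then show ?thesis
    using invertible_left_inverse matrix_left_invertible_ker by blast
qed

lemma matrix_vector_mul_matrix_inv:
  fixes A :: "'a::field^'n^'n"
  assumes "invertible A"
  shows "A *v (matrix_inv A *v w) = w"
proof -
  have "\<exists>A'. A ** A' = mat 1 \<and> A' ** A = mat 1"
    using assms unfolding invertible_def by blast
  then have "A ** matrix_inv A = mat 1"
    unfolding matrix_inv_def by (rule someI2_ex) blast
  then show ?thesis by (metis matrix_vector_mul_assoc matrix_vector_mul_lid)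
qed

lemma sym_mat_inner_commute:
  fixes H :: "real^'p^'p"
  assumes "sym_mat H"
  shows "(H *v a) \<bullet> c = a \<bullet> (H *v c)"
  using assms unfolding sym_mat_def by (metis dot_lmul_matrix vector_transpose_matrix)

lemma subdiff_monotone:
  assumes "a \<in> subdiff f x" "c \<in> subdiff f z"
  shows "0 \<le> (a - c) \<bullet> (x - z)"
proof -
  obtain p q where p: "f x = ereal p" and q: "f z = ereal q"
    using assms unfolding subdiff_def by (cases "f x"; cases "f z") auto
  have "f x + ereal (a \<bullet> (z - x)) \<le> f z" "f z + ereal (c \<bullet> (x - z)) \<le> f x"
    using assms unfolding subdiff_def by blast+
  then have "p + a \<bullet> (z - x) \<le> q" "q + c \<bullet> (x - z) \<le> p"
    using p q by simp_all
  moreover have "(a - c) \<bullet> (x - z) = - (a \<bullet> (z - x)) - c \<bullet> (x - z)"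
    by (simp add: inner_diff_left inner_diff_right)
  ultimately show ?thesis by linarith
qed

lemma convex_fun_segment_le:
  assumes "convex_fun g" "g y = ereal a" "g w = ereal c" "0 \<le> t" "t \<le> 1"
  shows "g (y + t *\<^sub>R (w - y)) \<le> ereal ((1 - t) * a + t * c)"
proof -
  have "(y, a) \<in> epigraph_e g" "(w, c) \<in> epigraph_e g"
    using assms unfolding epigraph_e_def by auto
  then have "(1 - t) *\<^sub>R (y, a) + t *\<^sub>R (w, c) \<in> epigraph_e g"
    using assms unfolding convex_fun_def by (intro convexD) auto
  moreover have "y + t *\<^sub>R (w - y) = (1 - t) *\<^sub>R y + t *\<^sub>R w"
    by (simp add: algebra_simps)
  ultimately show ?thesis unfolding epigraph_e_def by auto
qed

lemma le_of_forall_unit_interval_le_add_mult: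
  fixes a c C :: real
  assumes "\<And>t. 0 < t \<Longrightarrow> t \<le> 1 \<Longrightarrow> a \<le> c + t * C"
  shows "a \<le> c"
proof (rule field_le_epsilon)
  fix e :: real
  assume "0 < e"
  define t where "t = min 1 (e / (\<bar>C\<bar> + 1))"
  have t: "0 < t" "t \<le> 1" using \<open>0 < e\<close> by (auto simp: t_def)
  have "t * C \<le> t * (\<bar>C\<bar> + 1)"
    using t by (intro mult_left_mono) auto
  also have "\<dots> \<le> e / (\<bar>C\<bar> + 1) * (\<bar>C\<bar> + 1)"
    by (intro mult_right_mono) (auto simp: t_def)
  finally show "a \<le> c + e" using assms[OF t] by simp
qed

lemma minimizer_finite:
  assumes "proper_fun g" "\<And>w. g y + ereal (q y) \<le> g w + ereal (q w)"
  obtains a where "g y = ereal a"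
proof -
  obtain w where w: "g w \<noteq> \<infinity>" "g w \<noteq> -\<infinity>"
    using assms(1) unfolding proper_fun_def by auto
  have "g y \<noteq> \<infinity>"
    using assms(2)[of w] w by auto
  moreover have "g y \<noteq> -\<infinity>"
    using assms(1) unfolding proper_fun_def by auto
  ultimately show ?thesis using that by (cases "g y") auto
qed

lemma subdiff_of_minimizer:
  fixes g :: "'a::real_inner \<Rightarrow> ereal"
  assumes proper: "proper_fun g" and convex: "convex_fun g"
    and min: "\<And>w. g y + ereal (q y) \<le> g w + ereal (q w)"
    and segment: "\<And>w t. q (y + t *\<^sub>R (w - y)) = q y - t * (v \<bullet> (w - y)) + t\<^sup>2 * C w"
  shows "v \<in> subdiff g y"
proof -
  obtain a where a: "g y = ereal a" using minimizer_finite[OF proper min] .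
  have "g y + ereal (v \<bullet> (w - y)) \<le> g w" for w
  proof (cases "g w = \<infinity>")
    case False
    with proper obtain c where c: "g w = ereal c"
      unfolding proper_fun_def by (cases "g w") auto
    have "a \<le> (c - v \<bullet> (w - y)) + t * C w" if t: "0 < t" "t \<le> 1" for t
    proof -
      let ?w = "y + t *\<^sub>R (w - y)"
      have le: "g ?w \<le> ereal ((1 - t) * a + t * c)"
        using convex_fun_segment_le[OF convex a c] t by simp
      moreover have "g ?w \<noteq> -\<infinity>"
        using proper unfolding proper_fun_def by blast
      ultimately obtain m where m: "g ?w = ereal m" "m \<le> (1 - t) * a + t * c"
        by (cases "g ?w") auto
      have "a + q y \<le> m + q ?w" using min[of ?w] a m by simp
      with m have "t * a \<le> t * (c - v \<bullet> (w - y) + t * C w)"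
        unfolding segment by (simp add: algebra_simps power2_eq_square)
      then show ?thesis using t by simp
    qed
    then have "a \<le> c - v \<bullet> (w - y)" by (rule le_of_forall_unit_interval_le_add_mult)
    then show ?thesis using a c by simp
  qed simp
  then show ?thesis unfolding subdiff_def using a by auto
qed

lemma prox_objective_segment:
  fixes H :: "real^'p^'p" and B :: "real^'p^'m" and a b \<gamma>h :: "real^'m"
    and y0 y w :: "real^'p" and \<beta> :: real
  assumes "sym_mat H"
  defines "q \<equiv> \<lambda>v. - (\<gamma>h \<bullet> (B *v v)) + \<beta> / 2 * (norm (a + B *v v - b))\<^sup>2 + 1 / 2 * qnorm2 H (v - y0)"
  shows "q (y + t *\<^sub>R (w - y)) =
      q y - t * ((transpose B *v (\<gamma>h - \<beta> *\<^sub>R (a + B *v y - b)) + H *v (y0 - y)) \<bullet> (w - y))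
      + t\<^sup>2 * (\<beta> / 2 * (norm (B *v (w - y)))\<^sup>2 + 1 / 2 * qnorm2 H (w - y))"
proof -
  define d where "d = w - y"
  define r where "r = a + B *v y - b"
  define e where "e = y - y0"
  have res: "a + B *v (y + t *\<^sub>R d) - b = r + t *\<^sub>R (B *v d)"
    unfolding r_def by (simp add: algebra_simps)
  have prox: "y + t *\<^sub>R d - y0 = e + t *\<^sub>R d"
    unfolding e_def by simp
  have "q (y + t *\<^sub>R d) = - (\<gamma>h \<bullet> (B *v y)) - t * (\<gamma>h \<bullet> (B *v d))
      + \<beta> / 2 * ((r + t *\<^sub>R (B *v d)) \<bullet> (r + t *\<^sub>R (B *v d)))
      + 1/2 * ((H *v (e + t *\<^sub>R d)) \<bullet> (e + t *\<^sub>R d))"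
    unfolding q_def res prox qnorm2_def power2_norm_eq_inner
    by (simp add: matrix_vector_right_distrib matrix_vector_mult_scaleR inner_add_right)
  also have "\<dots> = - (\<gamma>h \<bullet> (B *v y)) - t * (\<gamma>h \<bullet> (B *v d)) + \<beta> / 2 * (r \<bullet> r)
      + t * \<beta> * (r \<bullet> (B *v d)) + t\<^sup>2 * (\<beta> / 2 * ((B *v d) \<bullet> (B *v d)))
      + 1/2 * ((H *v e) \<bullet> e) + t * ((H *v e) \<bullet> d) + t\<^sup>2 * (1/2 * ((H *v d) \<bullet> d))"
    using sym_mat_inner_commute[OF assms(1), of d e] inner_commute[of d "H *v e"]
    by (simp add: inner_commute[of "B *v d" r] algebra_simps power2_eq_square)
  finally have left: "q (y + t *\<^sub>R d) = \<dots>" .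
  have qy: "q y = - (\<gamma>h \<bullet> (B *v y)) + \<beta> / 2 * (r \<bullet> r) + 1/2 * ((H *v e) \<bullet> e)"
    unfolding q_def r_def e_def qnorm2_def power2_norm_eq_inner by simp
  have subgradient: "(transpose B *v (\<gamma>h - \<beta> *\<^sub>R r) + H *v (y0 - y)) \<bullet> d
      = \<gamma>h \<bullet> (B *v d) - \<beta> * (r \<bullet> (B *v d)) - (H *v e) \<bullet> d"
    unfolding e_def
    by (simp add: dot_lmul_matrix algebra_simps)
  show ?thesis
    unfolding d_def[symmetric] r_def[symmetric] left qy subgradient qnorm2_def power2_norm_eq_inner
    by (simp add: algebra_simps)
qed

lemma prox_step_subdiff:
  fixes g :: "real^'p \<Rightarrow> ereal" and H :: "real^'p^'p" and B :: "real^'p^'m"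
    and a b \<gamma>h :: "real^'m" and y0 y :: "real^'p" and \<beta> :: real
  defines "q \<equiv> \<lambda>v. - (\<gamma>h \<bullet> (B *v v)) + \<beta> / 2 * (norm (a + B *v v - b))\<^sup>2 + 1 / 2 * qnorm2 H (v - y0)"
  assumes "proper_fun g" "convex_fun g" "sym_mat H"
    and "\<And>w. g y + ereal (q y) \<le> g w + ereal (q w)"
  shows "transpose B *v (\<gamma>h - \<beta> *\<^sub>R (a + B *v y - b)) + H *v (y0 - y) \<in> subdiff g y"
  using assms(2,3,5) unfolding q_def
  by (rule subdiff_of_minimizer) (rule prox_objective_segment[OF assms(4)])

lemma self_adjoint_four_point:
  fixes L :: "'a::real_inner \<Rightarrow> 'a"
  assumes "linear L" and self_adjoint: "\<And>a b. L a \<bullet> b = a \<bullet> L b"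
  shows "L (p - c) \<bullet> (p - c) - L (p - d) \<bullet> (p - d) - (L (q - c) \<bullet> (q - c) - L (q - d) \<bullet> (q - d))
    = - 2 * (L (d - c) \<bullet> (q - p))"
proof -
  have "L a \<bullet> b = L b \<bullet> a" for a b
    by (metis self_adjoint inner_commute)
  then show ?thesis
    by (simp add: linear_diff[OF assms(1)] algebra_simps)
qed

definition M_op :: "real^'n^'n \<Rightarrow> real^'p^'p \<Rightarrow> real^'p^'m \<Rightarrow> real \<Rightarrow> real \<Rightarrow> real
    \<Rightarrow> (real^'n) \<times> (real^'p) \<times> (real^'m) \<Rightarrow> (real^'n) \<times> (real^'p) \<times> (real^'m)" where
  "M_op G H B \<beta> \<tau> \<theta> = (\<lambda>(dx, dy, dg).
     (G *v dx,
      H *v dy + ((\<tau> - \<tau> * \<theta> + \<theta>) * \<beta> / (\<tau> + \<theta>)) *\<^sub>R (transpose B *v (B *v dy))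
        - (\<tau> / (\<tau> + \<theta>)) *\<^sub>R (transpose B *v dg),
      - (\<tau> / (\<tau> + \<theta>)) *\<^sub>R (B *v dy) + (1 / ((\<tau> + \<theta>) * \<beta>)) *\<^sub>R dg))"

lemma Mnorm2_eq_inner_M_op:
  "Mnorm2 G H B \<beta> \<tau> \<theta> dx dy dg = M_op G H B \<beta> \<tau> \<theta> (dx, dy, dg) \<bullet> (dx, dy, dg)"
  by (simp add: Mnorm2_def M_op_def)

lemma linear_M_op: "linear (M_op G H B \<beta> \<tau> \<theta>)"
  by (rule linearI)
    (auto simp: M_op_def algebra_simps simp del: transpose_matrix_vector)

lemma inner_M_op:
  "M_op G H B \<beta> \<tau> \<theta> (dx, dy, dg) \<bullet> (ex, ey, eg) =
     (G *v dx) \<bullet> ex + (H *v dy) \<bullet> ey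
     + ((\<tau> - \<tau> * \<theta> + \<theta>) * \<beta> / (\<tau> + \<theta>)) * ((B *v dy) \<bullet> (B *v ey))
     - (\<tau> / (\<tau> + \<theta>)) * (dg \<bullet> (B *v ey) + (B *v dy) \<bullet> eg)
     + (1 / ((\<tau> + \<theta>) * \<beta>)) * (dg \<bullet> eg)"
proof -
  have "(transpose B *v w) \<bullet> v = w \<bullet> (B *v v)" for w v
    by (simp add: dot_lmul_matrix)
  then show ?thesis
    by (simp add: M_op_def algebra_simps del: transpose_matrix_vector)
qed

lemma M_op_self_adjoint:
  assumes "sym_mat G" "sym_mat H"
  shows "M_op G H B \<beta> \<tau> \<theta> d \<bullet> e = d \<bullet> M_op G H B \<beta> \<tau> \<theta> e"
proof -
  obtain dx dy dg ex ey eg where de: "d = (dx, dy, dg)" "e = (ex, ey, eg)"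
    by (cases d; cases e) auto
  have "(G *v dx) \<bullet> ex = (G *v ex) \<bullet> dx" "(H *v dy) \<bullet> ey = (H *v ey) \<bullet> dy"
    using sym_mat_inner_commute[OF assms(1), of dx ex] sym_mat_inner_commute[OF assms(2), of dy ey]
    by (simp_all add: inner_commute)
  then have "M_op G H B \<beta> \<tau> \<theta> d \<bullet> e = M_op G H B \<beta> \<tau> \<theta> e \<bullet> d"
    unfolding de inner_M_op
    by (simp add: inner_commute[of "B *v ey"] inner_commute[of eg] inner_commute[of ey])
  then show ?thesis by (metis inner_commute)
qed

text \<open>The off-diagonal blocks of \<open>M\<close> are chosen exactly so that \<open>M (z\<^bsub>k-1\<^esub> - z\<^sub>k)\<close> is the
  triple of \<open>x\<close>-step error, shifted \<open>y\<close>-step subgradient and constraint residual.\<close>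
lemma M_op_iterate_difference:
  fixes G :: "real^'n^'n" and H :: "real^'p^'p" and B :: "real^'p^'m"
    and x0 x1 u :: "real^'n" and y0 y1 :: "real^'p" and \<gamma>0 \<gamma>1 \<gamma>t r0 r1 :: "real^'m"
  assumes "\<beta> \<noteq> 0" "\<tau> + \<theta> \<noteq> 0"
    and "G *v (x0 - x1) = u"
    and "\<gamma>t = \<gamma>0 - \<beta> *\<^sub>R r0"
    and "\<gamma>1 = \<gamma>0 - (\<tau> * \<beta>) *\<^sub>R r0 - (\<theta> * \<beta>) *\<^sub>R r1"
    and "r0 = r1 + B *v (y0 - y1)"
  shows "M_op G H B \<beta> \<tau> \<theta> (x0 - x1, y0 - y1, \<gamma>0 - \<gamma>1) =
    (u, transpose B *v (\<gamma>0 - (\<tau> * \<beta>) *\<^sub>R r0 - \<beta> *\<^sub>R r1) + H *v (y0 - y1) - transpose B *v \<gamma>t, r1)"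
proof -
  define s where "s = \<tau> / (\<tau> + \<theta>)"
  define c where "c = (\<tau> - \<tau> * \<theta> + \<theta>) * \<beta> / (\<tau> + \<theta>)"
  define \<kappa> where "\<kappa> = 1 / ((\<tau> + \<theta>) * \<beta>)"
  have \<kappa>_\<tau>: "\<kappa> * (\<tau> * \<beta>) = s" and \<kappa>_\<theta>: "\<kappa> * (\<theta> * \<beta>) = 1 - s"
    using assms(1,2) unfolding \<kappa>_def s_def by (simp_all add: diff_divide_eq_iff)
  have c_s: "c - s * (\<tau> * \<beta>) = (1 - \<tau>) * \<beta>" and s_sum: "s * ((\<tau> + \<theta>) * \<beta>) = \<tau> * \<beta>"
    using assms(1,2) unfolding c_def s_def by (simp_all add: divide_simps) (simp add: algebra_simps)
  define dy where "dy = y0 - y1"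
  have d\<gamma>: "\<gamma>0 - \<gamma>1 = (\<tau> * \<beta>) *\<^sub>R (r1 + B *v dy) + (\<theta> * \<beta>) *\<^sub>R r1"
    using assms(5,6) unfolding dy_def by simp
  have second: "H *v dy + c *\<^sub>R (transpose B *v (B *v dy)) - s *\<^sub>R (transpose B *v (\<gamma>0 - \<gamma>1))
      = transpose B *v (\<gamma>0 - (\<tau> * \<beta>) *\<^sub>R r0 - \<beta> *\<^sub>R r1) + H *v dy - transpose B *v \<gamma>t"
  proof -
    have "H *v dy + c *\<^sub>R (transpose B *v (B *v dy)) - s *\<^sub>R (transpose B *v (\<gamma>0 - \<gamma>1))
        = H *v dy + (c - s * (\<tau> * \<beta>)) *\<^sub>R (transpose B *v (B *v dy))
          - (s * ((\<tau> + \<theta>) * \<beta>)) *\<^sub>R (transpose B *v r1)"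
      unfolding d\<gamma>
      by (simp add: algebra_simps del: transpose_matrix_vector)
    also have "\<dots> = transpose B *v (\<gamma>0 - (\<tau> * \<beta>) *\<^sub>R r0 - \<beta> *\<^sub>R r1) + H *v dy - transpose B *v \<gamma>t"
      unfolding c_s s_sum assms(4,6) dy_def[symmetric]
      by (simp add: algebra_simps del: transpose_matrix_vector)
    finally show ?thesis .
  qed
  have "- s *\<^sub>R (B *v dy) + \<kappa> *\<^sub>R (\<gamma>0 - \<gamma>1)
      = (\<kappa> * (\<tau> * \<beta>) - s) *\<^sub>R (B *v dy) + (\<kappa> * (\<tau> * \<beta>) + \<kappa> * (\<theta> * \<beta>)) *\<^sub>R r1"
    unfolding d\<gamma> by (simp add: algebra_simps)
  then have third: "- s *\<^sub>R (B *v dy) + \<kappa> *\<^sub>R (\<gamma>0 - \<gamma>1) = r1"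
    unfolding \<kappa>_\<tau> \<kappa>_\<theta> by simp
  show ?thesis
    using assms(3) second third unfolding M_op_def s_def c_def \<kappa>_def dy_def by simp
qed

lemma Mnorm2_four_point_le:
  assumes "sym_mat G" "sym_mat H"
    and "0 \<le> M_op G H B \<beta> \<tau> \<theta> (d1 - c1, d2 - c2, d3 - c3) \<bullet> (q1 - p1, q2 - p2, q3 - p3)"
  shows "Mnorm2 G H B \<beta> \<tau> \<theta> (p1 - c1) (p2 - c2) (p3 - c3) - Mnorm2 G H B \<beta> \<tau> \<theta> (p1 - d1) (p2 - d2) (p3 - d3)
    \<le> Mnorm2 G H B \<beta> \<tau> \<theta> (q1 - c1) (q2 - c2) (q3 - c3) - Mnorm2 G H B \<beta> \<tau> \<theta> (q1 - d1) (q2 - d2) (q3 - d3)"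
  using assms(3) self_adjoint_four_point[OF linear_M_op M_op_self_adjoint[OF assms(1,2), of B \<beta> \<tau> \<theta>],
      where p = "(p1, p2, p3)" and c = "(c1, c2, c3)" and d = "(d1, d2, d3)" and q = "(q1, q2, q3)"]
  unfolding Mnorm2_eq_inner_M_op by simp

lemma inner_lagrangian_residual:
  fixes A :: "real^'n^'m" and B :: "real^'p^'m"
  assumes "A *v xs + B *v ys - b = 0"
  shows "(u, v - transpose B *v \<gamma>t, A *v xt + B *v yt - b) \<bullet> (xt - xs, yt - ys, \<gamma>t - \<gamma>s)
    = (u + transpose A *v \<gamma>t - transpose A *v \<gamma>s) \<bullet> (xt - xs) + (v - transpose B *v \<gamma>s) \<bullet> (yt - ys)"
proof -
  have residual: "A *v xt + B *v yt - b = A *v (xt - xs) + B *v (yt - ys)"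
    using assms by (simp add: algebra_simps)
  show ?thesis
    unfolding residual
    by (simp add: inner_add_left inner_diff_left inner_add_right inner_diff_right dot_lmul_matrix
        matrix_vector_mult_diff_distrib inner_commute[of "A *v _"] inner_commute[of "B *v _"])
qed

theorem lemma2p4:
  fixes f :: "real^'n \<Rightarrow> ereal" and g :: "real^'p \<Rightarrow> ereal"
    and A :: "real^'n^'m" and B :: "real^'p^'m" and b :: "real^'m"
    and G :: "real^'n^'n" and H :: "real^'p^'p"
    and \<beta> \<sigma>t \<sigma>h \<tau> \<theta> :: real
    and x :: "nat \<Rightarrow> real^'n" and y :: "nat \<Rightarrow> real^'p" and \<gamma> :: "nat \<Rightarrow> real^'m"
    and xt :: "nat \<Rightarrow> real^'n" and u :: "nat \<Rightarrow> real^'n" and \<gamma>t :: "nat \<Rightarrow> real^'m"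
    and xs :: "real^'n" and ys :: "real^'p" and \<gamma>s :: "real^'m"
    and k :: nat
  assumes f: "proper_fun f" "closed_fun f" "convex_fun f"
    and g: "proper_fun g" "closed_fun g" "convex_fun g"
    and sol_exists: "\<exists>x0 y0 \<gamma>0. T_zero f g A B b x0 y0 \<gamma>0"
    and \<beta>: "\<beta> > 0"
    and \<sigma>t: "0 \<le> \<sigma>t" "\<sigma>t < 1" and \<sigma>h: "0 \<le> \<sigma>h" "\<sigma>h < 1"
    and G: "pos_def G" and H: "pos_semidef H"
    and reg: "region \<sigma>t \<tau> \<theta>"
    and gt: "\<And>j. j \<ge> 1 \<Longrightarrow> \<gamma>t j = \<gamma> (j - 1) - \<beta> *\<^sub>R (A *v xt j + B *v y (j - 1) - b)"
    and u: "\<And>j. j \<ge> 1 \<Longrightarrow> u j + transpose A *v \<gamma>t j \<in> subdiff f (xt j)"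
    and inexact: "\<And>j. j \<ge> 1 \<Longrightarrow>
        qnorm2 G (xt j - x (j - 1) + matrix_inv G *v u j)
          \<le> \<sigma>t / \<beta> * (norm (\<gamma>t j - \<gamma> (j - 1)))^2 + \<sigma>h * qnorm2 G (xt j - x (j - 1))"
    and ystep: "\<And>j w. j \<ge> 1 \<Longrightarrow>
        (let \<gamma>half = \<gamma> (j - 1) - (\<tau> * \<beta>) *\<^sub>R (A *v xt j + B *v y (j - 1) - b);
             obj = (\<lambda>v. g v + ereal (- (\<gamma>half \<bullet> (B *v v))
                      + \<beta> / 2 * (norm (A *v xt j + B *v v - b))^2
                      + 1 / 2 * qnorm2 H (v - y (j - 1))))
         in obj (y j) \<le> obj w)"
    and xstep: "\<And>j. j \<ge> 1 \<Longrightarrow> x j = x (j - 1) - matrix_inv G *v u j"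
    and gstep: "\<And>j. j \<ge> 1 \<Longrightarrow>
        \<gamma> j = (\<gamma> (j - 1) - (\<tau> * \<beta>) *\<^sub>R (A *v xt j + B *v y (j - 1) - b))
               - (\<theta> * \<beta>) *\<^sub>R (A *v xt j + B *v y j - b)"
    and zs: "T_zero f g A B b xs ys \<gamma>s"
    and k: "k \<ge> 1"
  shows "Mnorm2 G H B \<beta> \<tau> \<theta> (xs - x k) (ys - y k) (\<gamma>s - \<gamma> k)
         - Mnorm2 G H B \<beta> \<tau> \<theta> (xs - x (k - 1)) (ys - y (k - 1)) (\<gamma>s - \<gamma> (k - 1))
       \<le> Mnorm2 G H B \<beta> \<tau> \<theta> (xt k - x k) (y k - y k) (\<gamma>t k - \<gamma> k)
         - Mnorm2 G H B \<beta> \<tau> \<theta> (xt k - x (k - 1)) (y k - y (k - 1)) (\<gamma>t k - \<gamma> (k - 1))"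
proof -
  have "\<tau> + \<theta> \<noteq> 0" using reg unfolding region_def by auto
  have symG: "sym_mat G" and symH: "sym_mat H"
    using G H unfolding pos_def_def pos_semidef_def by auto
  have sol: "transpose A *v \<gamma>s \<in> subdiff f xs" "transpose B *v \<gamma>s \<in> subdiff g ys"
    "A *v xs + B *v ys - b = 0"
    using zs unfolding T_zero_def by auto
  define r0 where "r0 = A *v xt k + B *v y (k - 1) - b"
  define r where "r = A *v xt k + B *v y k - b"
  define v where "v = transpose B *v (\<gamma> (k - 1) - (\<tau> * \<beta>) *\<^sub>R r0 - \<beta> *\<^sub>R r) + H *v (y (k - 1) - y k)"
  have v_subgradient: "v \<in> subdiff g (y k)"
    unfolding v_def r0_def r_def
    by (rule prox_step_subdiff[OF g(1,3) symH]) (use ystep[OF k] in \<open>simp add: Let_def\<close>)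
  have M_step: "M_op G H B \<beta> \<tau> \<theta> (x (k - 1) - x k, y (k - 1) - y k, \<gamma> (k - 1) - \<gamma> k)
      = (u k, v - transpose B *v \<gamma>t k, r)"
    unfolding v_def
  proof (rule M_op_iterate_difference)
    show "G *v (x (k - 1) - x k) = u k"
      using xstep[OF k] matrix_vector_mul_matrix_inv[OF pos_def_invertible[OF G]] by simp
    show "r0 = r + B *v (y (k - 1) - y k)"
      unfolding r0_def r_def by (simp add: matrix_vector_mult_diff_distrib)
  qed (use \<beta> \<open>\<tau> + \<theta> \<noteq> 0\<close> gt[OF k] gstep[OF k] in \<open>auto simp: r0_def r_def\<close>)
  have "0 \<le> M_op G H B \<beta> \<tau> \<theta> (x (k - 1) - x k, y (k - 1) - y k, \<gamma> (k - 1) - \<gamma> k)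
      \<bullet> (xt k - xs, y k - ys, \<gamma>t k - \<gamma>s)"
    unfolding M_step r_def inner_lagrangian_residual[OF sol(3)]
    using subdiff_monotone[OF u[OF k] sol(1)] subdiff_monotone[OF v_subgradient sol(2)] by simp
  then show ?thesis by (rule Mnorm2_four_point_le[OF symG symH])
qed

end
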